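(* Let $\mathbb X,\mathbb Y,\mathbb X^\sharp,\mathbb Y^\sharp$ be sets, $c:\mathbb X\times\mathbb X^\sharp\to\overline{\mathbb R}$ and $d:\mathbb Y\times\mathbb Y^\sharp\to\overline{\mathbb R}$ couplings, $E:\mathbb X\times\mathbb Y^\sharp\to\overline{\mathbb R}$, $f:\mathbb X\to\overline{\mathbb R}$ and $g:\mathbb Y\to\overline{\mathbb R}$. If $$f(x)\ge\inf_{y\in\mathbb Y}\Big(\sup_{y^\sharp\in\mathbb Y^\sharp}\big(d(y,y^\sharp)\mathbin{\underset{\cdot}{+}}(-E(x,y^\sharp))\big)\mathbin{\overset{\cdot}{+}} g(y)\Big)\quad\text{for all }x\in\mathbb X,$$ then $$f^{c}(x^\sharp)\le\inf_{y^\sharp\in\mathbb Y^\sharp}\Big(\sup_{x\in\mathbb X}\big(c(x,x^\sharp)\mathbin{\underset{\cdot}{+}} E(x,y^\sharp)\big)\mathbin{\overset{\cdot}{+}} g^{-d}(y^\sharp)\Big)\quad\text{for all }x^\sharp\in\mathbb X^\sharp.$$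
   Context: $\overline{\mathbb R}=[-\infty,+\infty]$. The Moreau lower addition $\mathbin{\underset{\cdot}{+}}$ is usual addition extended by $(+\infty)\mathbin{\underset{\cdot}{+}}(-\infty)=(-\infty)\mathbin{\underset{\cdot}{+}}(+\infty)=-\infty$; the Moreau upper addition $\mathbin{\overset{\cdot}{+}}$ is usual addition extended by $(+\infty)\mathbin{\overset{\cdot}{+}}(-\infty)=(-\infty)\mathbin{\overset{\cdot}{+}}(+\infty)=+\infty$. $f^{c}(x^\sharp)=\sup_{x}\big(c(x,x^\sharp)\mathbin{\underset{\cdot}{+}}(-f(x))\big)$ and $g^{-d}(y^\sharp)=\sup_{y}\big((-d(y,y^\sharp))\mathbin{\underset{\cdot}{+}}(-g(y))\big)$. *)

theory Defs
  imports "HOL-Analysis.Analysis"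
begin

definition lower_add :: "ereal \<Rightarrow> ereal \<Rightarrow> ereal" (infixl "+\<^sub>l" 65) where
  "a +\<^sub>l b = (if (a = \<infinity> \<and> b = -\<infinity>) \<or> (a = -\<infinity> \<and> b = \<infinity>) then -\<infinity> else a + b)"

definition upper_add :: "ereal \<Rightarrow> ereal \<Rightarrow> ereal" (infixl "+\<^sub>u" 65) where
  "a +\<^sub>u b = (if (a = \<infinity> \<and> b = -\<infinity>) \<or> (a = -\<infinity> \<and> b = \<infinity>) then \<infinity> else a + b)"

definition c_conj :: "('x \<Rightarrow> 'xs \<Rightarrow> ereal) \<Rightarrow> ('x \<Rightarrow> ereal) \<Rightarrow> 'xs \<Rightarrow> ereal" where
  "c_conj c f xs = (SUP x. c x xs +\<^sub>l (- f x))"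

definition negd_conj :: "('y \<Rightarrow> 'ys \<Rightarrow> ereal) \<Rightarrow> ('y \<Rightarrow> ereal) \<Rightarrow> 'ys \<Rightarrow> ereal" where
  "negd_conj d g ys = (SUP y. (- d y ys) +\<^sub>l (- g y))"

end

theory Submission
  imports Defs
begin

text \<open>Negating the hypothesis and keeping only the \<open>y\<^sup>\<sharp>\<close>-term of the inner
  supremum gives \<open>-f(x) \<le> sup\<^sub>y (E(x,y\<^sup>\<sharp>) - d(y,y\<^sup>\<sharp>) - g(y))\<close>. Adding \<open>c(x,x\<^sup>\<sharp>)\<close>, which
  commutes with the supremum, and regrouping the Moreau sums by the mixed associativity
  inequality \<open>a +\<^sub>l (b +\<^sub>u c) \<le> (a +\<^sub>l b) +\<^sub>u c\<close> bounds \<open>c(x,x\<^sup>\<sharp>) - f(x)\<close> by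
  \<open>(c(x,x\<^sup>\<sharp>) + E(x,y\<^sup>\<sharp>)) + g\<^sup>-\<^sup>d(y\<^sup>\<sharp>)\<close>; taking suprema and infima finishes the proof.\<close>

lemma lower_add_commute: "(a::ereal) +\<^sub>l b = b +\<^sub>l a"
  by (auto simp: lower_add_def add.commute)

lemma uminus_lower_add: "- ((a::ereal) +\<^sub>l b) = (- a) +\<^sub>u (- b)"
  by (cases a; cases b) (auto simp: lower_add_def upper_add_def)

lemma uminus_upper_add: "- ((a::ereal) +\<^sub>u b) = (- a) +\<^sub>l (- b)"
  by (cases a; cases b) (auto simp: lower_add_def upper_add_def)

lemma lower_add_mono: "(a::ereal) \<le> a' \<Longrightarrow> b \<le> b' \<Longrightarrow> a +\<^sub>l b \<le> a' +\<^sub>l b'"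
  by (cases a; cases a'; cases b; cases b') (auto simp: lower_add_def)

lemma upper_add_mono: "(a::ereal) \<le> a' \<Longrightarrow> b \<le> b' \<Longrightarrow> a +\<^sub>u b \<le> a' +\<^sub>u b'"
  by (cases a; cases a'; cases b; cases b') (auto simp: upper_add_def)

lemma lower_add_upper_add_le: "(a::ereal) +\<^sub>l (b +\<^sub>u c) \<le> (a +\<^sub>l b) +\<^sub>u c"
  by (cases a; cases b; cases c) (auto simp: lower_add_def upper_add_def)

lemma upper_add_lower_add_le: "((a::ereal) +\<^sub>u b) +\<^sub>l c \<le> a +\<^sub>u (b +\<^sub>l c)"
  by (cases a; cases b; cases c) (auto simp: lower_add_def upper_add_def)

lemma lower_add_SUP:
  fixes a :: ereal and h :: "'a \<Rightarrow> ereal"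
  shows "a +\<^sub>l (SUP y\<in>A. h y) = (SUP y\<in>A. a +\<^sub>l h y)"
proof (rule antisym)
  show "(SUP y\<in>A. a +\<^sub>l h y) \<le> a +\<^sub>l (SUP y\<in>A. h y)"
    by (intro SUP_least lower_add_mono SUP_upper) auto
next
  show "a +\<^sub>l (SUP y\<in>A. h y) \<le> (SUP y\<in>A. a +\<^sub>l h y)"
  proof (cases a)
    case (real r)
    show ?thesis
    proof (cases "A = {}")
      case True
      with real show ?thesis by (simp add: lower_add_def bot_ereal_def)
    next
      case False
      from real have "a +\<^sub>l (SUP y\<in>A. h y) = (SUP y\<in>A. h y) + a"
        by (simp add: lower_add_def add.commute)
      also have "\<dots> = (SUP y\<in>A. h y + a)"
        using real False by (intro SUP_ereal_add_left[symmetric]) auto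
      also have "\<dots> = (SUP y\<in>A. a +\<^sub>l h y)"
        using real by (simp add: lower_add_def add.commute)
      finally show ?thesis by simp
    qed
  next
    case PInf
    show ?thesis
    proof (cases "\<exists>y\<in>A. h y \<noteq> -\<infinity>")
      case True
      then obtain y where y: "y \<in> A" "h y \<noteq> -\<infinity>" by blast
      with PInf have "a +\<^sub>l h y = \<infinity>" by (simp add: lower_add_def)
      moreover have "a +\<^sub>l h y \<le> (SUP y\<in>A. a +\<^sub>l h y)" using y(1) by (rule SUP_upper)
      ultimately show ?thesis by simp
    next
      case False
      then have "(SUP y\<in>A. h y) = -\<infinity>"
        by (simp add: SUP_bot_conv flip: bot_ereal_def)
      with PInf show ?thesis by (simp add: lower_add_def)
    qed
  next
    case MInf
    then have "a +\<^sub>l (SUP y\<in>A. h y) = -\<infinity>"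
      by (cases "SUP y\<in>A. h y") (auto simp: lower_add_def)
    then show ?thesis by simp
  qed
qed

lemma uminus_INF_le_SUP:
  fixes d :: "'y \<Rightarrow> 'ys \<Rightarrow> ereal" and e :: "'ys \<Rightarrow> ereal" and g :: "'y \<Rightarrow> ereal"
  shows "- (INF y. (SUP ys'. d y ys' +\<^sub>l (- e ys')) +\<^sub>u g y) \<le> (SUP y. (e ys +\<^sub>u (- d y ys)) +\<^sub>l (- g y))"
proof -
  have "- (SUP ys'. d y ys' +\<^sub>l (- e ys')) \<le> e ys +\<^sub>u (- d y ys)" for y
  proof -
    have "d y ys +\<^sub>l (- e ys) \<le> (SUP ys'. d y ys' +\<^sub>l (- e ys'))"
      by (rule SUP_upper) simp
    then have "- (SUP ys'. d y ys' +\<^sub>l (- e ys')) \<le> - (d y ys +\<^sub>l (- e ys))"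
      by simp
    then show ?thesis
      by (simp add: uminus_lower_add lower_add_commute upper_add_def)
  qed
  then have "- ((SUP ys'. d y ys' +\<^sub>l (- e ys')) +\<^sub>u g y) \<le> (e ys +\<^sub>u (- d y ys)) +\<^sub>l (- g y)" for y
    unfolding uminus_upper_add by (intro lower_add_mono) auto
  then show ?thesis
    unfolding ereal_SUP_uminus_eq[symmetric] by (intro SUP_mono) auto
qed

lemma lower_add_SUP_le_upper_add:
  fixes a e :: ereal and d g :: "'y \<Rightarrow> ereal"
  shows "a +\<^sub>l (SUP y. (e +\<^sub>u (- d y)) +\<^sub>l (- g y)) \<le> (a +\<^sub>l e) +\<^sub>u (SUP y. (- d y) +\<^sub>l (- g y))"
proof -
  have "a +\<^sub>l ((e +\<^sub>u (- d y)) +\<^sub>l (- g y)) \<le> (a +\<^sub>l e) +\<^sub>u (SUP y. (- d y) +\<^sub>l (- g y))" for y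
  proof -
    have "(e +\<^sub>u (- d y)) +\<^sub>l (- g y) \<le> e +\<^sub>u ((- d y) +\<^sub>l (- g y))"
      by (rule upper_add_lower_add_le)
    then have "a +\<^sub>l ((e +\<^sub>u (- d y)) +\<^sub>l (- g y)) \<le> a +\<^sub>l (e +\<^sub>u ((- d y) +\<^sub>l (- g y)))"
      by (intro lower_add_mono) auto
    also have "\<dots> \<le> (a +\<^sub>l e) +\<^sub>u ((- d y) +\<^sub>l (- g y))"
      by (rule lower_add_upper_add_le)
    also have "\<dots> \<le> (a +\<^sub>l e) +\<^sub>u (SUP y. (- d y) +\<^sub>l (- g y))"
      by (intro upper_add_mono SUP_upper) auto
    finally show ?thesis .
  qed
  then show ?thesis
    unfolding lower_add_SUP by (rule SUP_least)
qed

theorem proposition4: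
  fixes c :: "'x \<Rightarrow> 'xs \<Rightarrow> ereal" and d :: "'y \<Rightarrow> 'ys \<Rightarrow> ereal"
    and E :: "'x \<Rightarrow> 'ys \<Rightarrow> ereal" and f :: "'x \<Rightarrow> ereal" and g :: "'y \<Rightarrow> ereal"
  assumes "\<forall>x. f x \<ge> (INF y. (SUP ys. d y ys +\<^sub>l (- E x ys)) +\<^sub>u g y)"
  shows "\<forall>xs. c_conj c f xs \<le> (INF ys. (SUP x. c x xs +\<^sub>l E x ys) +\<^sub>u negd_conj d g ys)"
proof (intro allI)
  fix xs
  show "c_conj c f xs \<le> (INF ys. (SUP x. c x xs +\<^sub>l E x ys) +\<^sub>u negd_conj d g ys)"
    unfolding c_conj_def
  proof (intro INF_greatest SUP_least)
    fix x ys
    have "- f x \<le> - (INF y. (SUP ys. d y ys +\<^sub>l (- E x ys)) +\<^sub>u g y)"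
      using assms by simp
    also have "\<dots> \<le> (SUP y. (E x ys +\<^sub>u (- d y ys)) +\<^sub>l (- g y))"
      by (rule uminus_INF_le_SUP)
    finally have "- f x \<le> (SUP y. (E x ys +\<^sub>u (- d y ys)) +\<^sub>l (- g y))" .
    then have "c x xs +\<^sub>l (- f x) \<le> c x xs +\<^sub>l (SUP y. (E x ys +\<^sub>u (- d y ys)) +\<^sub>l (- g y))"
      by (intro lower_add_mono) auto
    also have "\<dots> \<le> (c x xs +\<^sub>l E x ys) +\<^sub>u negd_conj d g ys"
      unfolding negd_conj_def by (rule lower_add_SUP_le_upper_add)
    also have "\<dots> \<le> (SUP x. c x xs +\<^sub>l E x ys) +\<^sub>u negd_conj d g ys"
      by (intro upper_add_mono SUP_upper) auto
    finally show "c x xs +\<^sub>l (- f x) \<le> (SUP x. c x xs +\<^sub>l E x ys) +\<^sub>u negd_conj d g ys" .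
  qed
qed

end
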